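(* Let $L$ be an infinite set and let $Q$ be either the edgeless cube $Q_L$ or the edged cube $\bar Q_L$. Every well-ordering $\preceq$ of $L$ can be coded into a configuration accessible from $f_{\mathrm{solved}}$; in particular, there is an injective map from the set of ordinals $\theta$ with $|L|\le\theta<|L|^+$ into the set of configurations of $Q$ accessible from $f_{\mathrm{solved}}$.
   Context: Let $L$ be an infinite set, $-L=\{-r:r\in L\}$ a disjoint copy of $L$, and $0$ a new element; $L^\dagger=-L\cup\{0\}\cup L$ with $-(-r)=r$, $-0=0$. Adjoin $\pm\infty$ with $-(+\infty)=-\infty$ and set $\bar L^\dagger=L^\dagger\cup\{\pm\infty\}$. Points of $U=(\bar L^\dagger)^3$ have coordinates $x,y,z$. The edgeless cube $Q_L$ is the set of points of $U$ with exactly one coordinate in $\{\pm\infty\}$ (cells). The edged cube $\bar Q_L$ is the set of cells $(p,i)$ with $p\in U$, $i\in\{x,y,z\}$, $p_i\in\{\pm\infty\}$ ($i$ marks the face). For $i\in\{x,y,z\}$, $\alpha\in\bar L^\dagger$, the quarter-turn twist $T_{i,\alpha}$ is the permutation of cells fixing every cell whose point $p$ has $p_i\ne\alpha$ and acting on the others by $T_{x,\alpha}(\alpha,y,z)=(\alpha,-z,y)$, $T_{y,\alpha}(x,\alpha,z)=(z,\alpha,-x)$, $T_{z,\alpha}(x,y,\alpha)=(-y,x,\alpha)$ (in $\bar Q_L$ the marked coordinate is carried along by the rotation). Basic twists are $T,T^2,T^3$ for quarter-turn twists $T$. A basic sequence is a sequence $\langle\sigma_\eta:\eta<\theta\rangle$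 of basic twists of ordinal length $\theta$. A configuration is a map $f$ from cells to the six colors red, white, green, orange, yellow, blue together with a special value NaC. The solved configuration $f_{\mathrm{solved}}$ colors a cell red, blue, white, orange, green, yellow according as its face is $x=+\infty$, $y=+\infty$, $z=+\infty$, $x=-\infty$, $y=-\infty$, $z=-\infty$ (in $\bar Q_L$, the face is the marked coordinate with its sign). A twist $\sigma$ acts by $(\sigma f)(c)=f(\sigma^{-1}c)$. Applying $\langle\sigma_\eta:\eta<\theta\rangle$ to $f_0$ produces $f_{\eta+1}=\sigma_\eta f_\eta$, and for limit $\lambda\le\theta$, $f_\lambda(c)$ is the eventually constant value of $f_\eta(c)$ ($\eta<\lambda$) if it exists and NaC otherwise; $f_\theta$ is the terminal configuration. $f$ is accessible from $f_0$ if it is the terminal configuration of some basic sequence applied to $f_0$. *)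

theory Defs
  imports Main
begin

(* Coordinates in \<bar>L\<dagger> with L = UNIV :: 'a set:  r, -r, 0, +\<infinity>, -\<infinity> *)
datatype 'a coord = Pos 'a | Neg 'a | Zero | PInf | NInf

fun cneg :: "'a coord \<Rightarrow> 'a coord" where
  "cneg (Pos r) = Neg r" | "cneg (Neg r) = Pos r" | "cneg Zero = Zero"
| "cneg PInf = NInf" | "cneg NInf = PInf"

definition is_inf :: "'a coord \<Rightarrow> bool" where
  "is_inf a \<longleftrightarrow> a = PInf \<or> a = NInf"

datatype axis = AX | AY | AZ

type_synonym 'a point = "'a coord \<times> 'a coord \<times> 'a coord"
(* a cell: a point together with a marked axis (face) *)
type_synonym 'a cell = "'a point \<times> axis"

fun get :: "'a point \<Rightarrow> axis \<Rightarrow> 'a coord" where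
  "get (a, b, c) AX = a" | "get (a, b, c) AY = b" | "get (a, b, c) AZ = c"

fun rot :: "axis \<Rightarrow> 'a point \<Rightarrow> 'a point" where
  "rot AX (a, b, c) = (a, cneg c, b)"
| "rot AY (a, b, c) = (c, b, cneg a)"
| "rot AZ (a, b, c) = (cneg b, a, c)"

(* how the marked axis is carried along by the rotation *)
fun rax :: "axis \<Rightarrow> axis \<Rightarrow> axis" where
  "rax AX AX = AX" | "rax AX AY = AZ" | "rax AX AZ = AY"
| "rax AY AX = AZ" | "rax AY AY = AY" | "rax AY AZ = AX"
| "rax AZ AX = AY" | "rax AZ AY = AX" | "rax AZ AZ = AZ"

definition twist :: "axis \<Rightarrow> 'a coord \<Rightarrow> 'a cell \<Rightarrow> 'a cell" where
  "twist i \<alpha> c = (case c of (p, j) \<Rightarrow>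
      if get p i = \<alpha> then (rot i p, rax i j) else (p, j))"

(* Edgeless cube: points with exactly one infinite coordinate; the mark is
   then the unique infinite coordinate (so it is redundant). *)
definition edged_cube :: "'a cell set" where
  "edged_cube = {(p, i). is_inf (get p i)}"

definition edgeless_cube :: "'a cell set" where
  "edgeless_cube = {(p, i). is_inf (get p i) \<and> (\<forall>j. j \<noteq> i \<longrightarrow> \<not> is_inf (get p j))}"

definition cube :: "bool \<Rightarrow> 'a cell set" where
  "cube edged = (if edged then edged_cube else edgeless_cube)"

datatype color = Red | White | Green | Orange | Yellow | Blue | NaC

type_synonym 'a config = "'a cell \<Rightarrow> color"

fun face_color :: "axis \<Rightarrow> 'a coord \<Rightarrow> color" where
  "face_color AX PInf = Red" | "face_color AY PInf = Blue" | "face_color AZ PInf = White"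
| "face_color AX NInf = Orange" | "face_color AY NInf = Green" | "face_color AZ NInf = Yellow"
| "face_color _ _ = NaC"

definition solved :: "'a cell set \<Rightarrow> 'a config" where
  "solved Q c = (case c of (p, i) \<Rightarrow> if (p, i) \<in> Q then face_color i (get p i) else NaC)"

(* basic twist: (i, \<alpha>, k) stands for T_{i,\<alpha>}^k, k \<in> {1,2,3} *)
type_synonym 'a btwist = "axis \<times> 'a coord \<times> nat"

definition basic_perm :: "'a btwist \<Rightarrow> 'a cell \<Rightarrow> 'a cell" where
  "basic_perm t = (case t of (i, \<alpha>, k) \<Rightarrow> twist i \<alpha> ^^ k)"

definition act :: "'a btwist \<Rightarrow> 'a config \<Rightarrow> 'a config" where
  "act t f = f \<circ> inv (basic_perm t)"

(* A basic sequence of ordinal length \<theta> is indexed by the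
   field of a well-order W (of type \<theta>); stages \<eta> \<le> \<theta> are Some \<eta> (\<eta> in Field W)
   and None (= \<theta>, the terminal stage).  below W p is the set of indices < p. *)
definition below :: "'i rel \<Rightarrow> 'i option \<Rightarrow> 'i set" where
  "below W p = (case p of None \<Rightarrow> Field W | Some b \<Rightarrow> {a. (a, b) \<in> W \<and> a \<noteq> b})"

definition stages :: "'i rel \<Rightarrow> 'i option set" where
  "stages W = insert None (Some ` Field W)"

(* value at a limit stage: the eventually constant value, or NaC *)
definition lim_val :: "'i rel \<Rightarrow> 'i set \<Rightarrow> ('i \<Rightarrow> 'a config) \<Rightarrow> 'a config" where
  "lim_val W B g c =
     (if \<exists>v. \<exists>a\<in>B. \<forall>b\<in>B. (a, b) \<in> W \<longrightarrow> g b c = v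
      then (THE v. \<exists>a\<in>B. \<forall>b\<in>B. (a, b) \<in> W \<longrightarrow> g b c = v) else NaC)"

definition is_run :: "'i rel \<Rightarrow> ('i \<Rightarrow> 'a btwist) \<Rightarrow> 'a config \<Rightarrow> ('i option \<Rightarrow> 'a config) \<Rightarrow> bool" where
  "is_run W \<sigma> f0 F \<longleftrightarrow>
     (\<forall>p\<in>stages W.
        (below W p = {} \<longrightarrow> F p = f0)
      \<and> (\<forall>m\<in>below W p. (\<forall>b\<in>below W p. (b, m) \<in> W) \<longrightarrow> F p = act (\<sigma> m) (F (Some m)))
      \<and> (below W p \<noteq> {} \<and> \<not> (\<exists>m\<in>below W p. \<forall>b\<in>below W p. (b, m) \<in> W)
           \<longrightarrow> F p = lim_val W (below W p) (\<lambda>b. F (Some b))))"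

definition basic_seq :: "'i rel \<Rightarrow> ('i \<Rightarrow> 'a btwist) \<Rightarrow> bool" where
  "basic_seq W \<sigma> \<longleftrightarrow> Well_order W \<and> (\<forall>\<eta>\<in>Field W. snd (snd (\<sigma> \<eta>)) \<in> {1, 2, 3})"

definition terminal :: "'i rel \<Rightarrow> ('i \<Rightarrow> 'a btwist) \<Rightarrow> 'a config \<Rightarrow> 'a config \<Rightarrow> bool" where
  "terminal W \<sigma> f0 f \<longleftrightarrow> (\<exists>F. is_run W \<sigma> f0 F \<and> F None = f)"

definition accessible :: "'a config \<Rightarrow> 'a config \<Rightarrow> bool" where
  "accessible f0 f \<longleftrightarrow>
     (\<exists>(W :: 'a set rel) \<sigma>. basic_seq W \<sigma> \<and> terminal W \<sigma> f0 f)"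

end

theory Submission
  imports Defs
begin

text \<open>
  Give every slice \<open>x = r\<close> (\<open>r \<in> L\<close>) at most one quarter turn.  Slices are disjoint, so
  for any \<open>S \<subseteq> L\<close> the configuration in which exactly the slices in \<open>S\<close> are turned is
  the terminal configuration of the sequence turning the elements of \<open>S\<close> once each, in
  the order of any well-order of \<open>S\<close>: at a limit stage every cell has been touched by at
  most one earlier twist, so its colour is eventually constant.  The cell
  \<open>((r, 0, +\<infinity>), z)\<close> is white in the solved cube and blue once slice \<open>r\<close> is turned, so
  distinct \<open>S\<close> give distinct configurations.  Since \<open>|L \<times> L| = |L|\<close>, every relation on
  \<open>L\<close>, in particular every well-order, is coded by a subset of \<open>L\<close>.
\<close>

lemma below_subset_Field: "below W p \<subseteq> Field W"
  by (auto simp: below_def FieldI1 split: option.splits)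

lemma below_Some_subset:
  assumes W: "Well_order W" and b: "b \<in> below W p"
  shows "below W (Some b) \<subseteq> below W p"
proof
  fix a assume "a \<in> below W (Some b)"
  then have ab: "(a, b) \<in> W" "a \<noteq> b" by (auto simp: below_def)
  show "a \<in> below W p"
  proof (cases p)
    case None
    then show ?thesis using ab by (auto simp: below_def FieldI1)
  next
    case (Some q)
    then have "(b, q) \<in> W" "b \<noteq> q" using b by (auto simp: below_def)
    with ab W have "(a, q) \<in> W" "a \<noteq> q"
      by (auto simp: order_on_defs dest: transD antisymD)
    then show ?thesis using Some by (auto simp: below_def)
  qed
qed

lemma below_eq_insert_max:
  assumes W: "Well_order W" and m: "m \<in> below W p" and max: "\<forall>b\<in>below W p. (b, m) \<in> W"
  shows "below W p = insert m (below W (Some m))"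
proof
  show "below W p \<subseteq> insert m (below W (Some m))"
    using max by (auto simp: below_def)
  show "insert m (below W (Some m)) \<subseteq> below W p"
    using m below_Some_subset[OF W m] by blast
qed

lemma limit_stage_eventually_below:
  assumes W: "Well_order W" and nonempty: "below W p \<noteq> {}"
    and no_max: "\<not> (\<exists>m\<in>below W p. \<forall>b\<in>below W p. (b, m) \<in> W)"
  shows "\<exists>a\<in>below W p. \<forall>b\<in>below W p. (a, b) \<in> W \<longrightarrow>
           (i \<in> below W (Some b) \<longleftrightarrow> i \<in> below W p)"
proof (cases "i \<in> below W p")
  case True
  then obtain a where a: "a \<in> below W p" "(a, i) \<notin> W" using no_max by blast
  have "a \<in> Field W" "i \<in> Field W" using a True below_subset_Field[of W p] by auto
  then have "(i, a) \<in> W"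
    using a(2) W by (metis wo_rel.TOTALS wo_rel_def)
  moreover have "trans W" using W by (simp add: order_on_defs)
  ultimately have "i \<in> below W (Some b)" if "b \<in> below W p" "(a, b) \<in> W" for b
    using that a by (auto simp: below_def dest: transD)
  then show ?thesis using a True by blast
next
  case False
  then show ?thesis using nonempty below_Some_subset[OF W] by blast
qed

lemma lim_val_eqI:
  assumes W: "Well_order W" and B: "B \<subseteq> Field W" and a: "a \<in> B"
    and const: "\<forall>b\<in>B. (a, b) \<in> W \<longrightarrow> g b c = v"
  shows "lim_val W B g c = v"
proof -
  have refl: "(x, x) \<in> W" if "x \<in> B" for x
    using that B W by (metis subsetD refl_onD wo_rel.REFL wo_rel_def)
  have "v' = v" if a': "a' \<in> B" "\<forall>b\<in>B. (a', b) \<in> W \<longrightarrow> g b c = v'" for a' v'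
  proof -
    have "(a, a') \<in> W \<or> (a', a) \<in> W"
      using W a a' B by (metis subsetD wo_rel.TOTALS wo_rel_def)
    then show "v' = v"
      using a a' const refl by metis
  qed
  then have "(THE v. \<exists>a\<in>B. \<forall>b\<in>B. (a, b) \<in> W \<longrightarrow> g b c = v) = v"
    using a const by blast
  then show ?thesis
    using a const unfolding lim_val_def by auto
qed

lemma is_run_initial_segments:
  assumes W: "Well_order W"
    and start: "G {} = f0"
    and step: "\<And>D m. D \<subseteq> Field W \<Longrightarrow> m \<in> Field W \<Longrightarrow> m \<notin> D \<Longrightarrow>
                  G (insert m D) = act (\<sigma> m) (G D)"
    and one_index: "\<And>c. \<exists>i. \<forall>D D'. D \<subseteq> Field W \<longrightarrow> D' \<subseteq> Field W \<longrightarrow>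
                  (i \<in> D \<longleftrightarrow> i \<in> D') \<longrightarrow> G D c = G D' c"
  shows "is_run W \<sigma> f0 (\<lambda>p. G (below W p))"
  unfolding is_run_def
proof (intro ballI conjI impI)
  fix p
  show "below W p = {} \<Longrightarrow> G (below W p) = f0" using start by simp
next
  fix p m
  assume m: "m \<in> below W p" and max: "\<forall>b\<in>below W p. (b, m) \<in> W"
  have "m \<in> Field W" "m \<notin> below W (Some m)"
    using m below_subset_Field[of W p] by (auto simp: below_def)
  then show "G (below W p) = act (\<sigma> m) (G (below W (Some m)))"
    unfolding below_eq_insert_max[OF W m max] by (rule step[OF below_subset_Field])
next
  fix p
  assume lim: "below W p \<noteq> {} \<and> \<not> (\<exists>m\<in>below W p. \<forall>b\<in>below W p. (b, m) \<in> W)"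
  show "G (below W p) = lim_val W (below W p) (\<lambda>b. G (below W (Some b)))"
  proof
    fix c
    obtain i where i: "\<forall>D D'. D \<subseteq> Field W \<longrightarrow> D' \<subseteq> Field W \<longrightarrow>
        (i \<in> D \<longleftrightarrow> i \<in> D') \<longrightarrow> G D c = G D' c"
      using one_index by blast
    obtain a where a: "a \<in> below W p"
      "\<forall>b\<in>below W p. (a, b) \<in> W \<longrightarrow> (i \<in> below W (Some b) \<longleftrightarrow> i \<in> below W p)"
      using limit_stage_eventually_below[OF W] lim by blast
    have "\<forall>b\<in>below W p. (a, b) \<in> W \<longrightarrow> G (below W (Some b)) c = G (below W p) c"
      using a(2) i[rule_format, OF below_subset_Field below_subset_Field] by blast
    from lim_val_eqI[where g = "\<lambda>b. G (below W (Some b))", OF W below_subset_Field a(1) this]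
    show "G (below W p) c = lim_val W (below W p) (\<lambda>b. G (below W (Some b))) c"
      by (rule sym)
  qed
qed

definition unrot_x :: "'a cell \<Rightarrow> 'a cell" where
  "unrot_x c = (case c of ((a, b, d), j) \<Rightarrow> ((a, d, cneg b), rax AX j))"

definition twisted_slices :: "'a cell set \<Rightarrow> 'a set \<Rightarrow> 'a config" where
  "twisted_slices Q S c = solved Q (if get (fst c) AX \<in> Pos ` S then unrot_x c else c)"

lemma cneg_cneg [simp]: "cneg (cneg a) = a"
  by (cases a) auto

lemma rax_AX_rax_AX [simp]: "rax AX (rax AX j) = j"
  by (cases j) auto

lemma inv_twist_x:
  "inv (twist AX \<alpha>) = (\<lambda>c. if get (fst c) AX = \<alpha> then unrot_x c else c)"
  by (rule inv_equality) (auto simp: twist_def unrot_x_def split: prod.splits)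

lemma get_unrot_x_AX [simp]: "get (fst (unrot_x c)) AX = get (fst c) AX"
  by (auto simp: unrot_x_def split: prod.splits)

lemma act_twisted_slices:
  assumes "r \<notin> S"
  shows "act (AX, Pos r, 1) (twisted_slices Q S) = twisted_slices Q (insert r S)"
  using assms by (auto simp: act_def basic_perm_def inv_twist_x twisted_slices_def)

lemma twisted_slices_Pos:
  "get (fst c) AX = Pos r \<Longrightarrow> twisted_slices Q S c = solved Q (if r \<in> S then unrot_x c else c)"
  by (auto simp: twisted_slices_def)

lemma twisted_slices_empty: "twisted_slices Q {} = solved Q"
  by (auto simp: twisted_slices_def)

lemma accessible_twisted_slices:
  "accessible (solved (cube edged)) (twisted_slices (cube edged) S)"
proof -
  obtain W :: "'a set rel" where wo: "well_order_on ((\<lambda>s. {s}) ` S) W"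
    using well_order_on by blast
  then have FW: "Field W = (\<lambda>s. {s}) ` S"
    by (rule well_order_on_Field[symmetric])
  with wo have W: "Well_order W" by simp
  have mem_the_elem_image: "s \<in> the_elem ` D \<longleftrightarrow> {s} \<in> D" if "D \<subseteq> Field W" for s D
    using that unfolding FW by (force simp: subset_iff)
  define \<sigma> :: "'a set \<Rightarrow> 'a btwist" where "\<sigma> m = (AX, Pos (the_elem m), 1)" for m
  define G :: "'a set set \<Rightarrow> 'a config"
    where "G D = twisted_slices (cube edged) (the_elem ` D)" for D
  have "is_run W \<sigma> (solved (cube edged)) (\<lambda>p. G (below W p))"
  proof (rule is_run_initial_segments[OF W])
    show "G {} = solved (cube edged)"
      by (simp add: G_def twisted_slices_empty)
    show "G (insert m D) = act (\<sigma> m) (G D)"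
      if D: "D \<subseteq> Field W" and m: "m \<in> Field W" "m \<notin> D" for D m
    proof -
      obtain s where s: "m = {s}" using m(1) FW by blast
      then have "s \<notin> the_elem ` D" using mem_the_elem_image[OF D] m(2) by blast
      then show ?thesis
        unfolding G_def \<sigma>_def s image_insert the_elem_eq by (rule act_twisted_slices[symmetric])
    qed
    show "\<exists>i. \<forall>D D'. D \<subseteq> Field W \<longrightarrow> D' \<subseteq> Field W \<longrightarrow>
            (i \<in> D \<longleftrightarrow> i \<in> D') \<longrightarrow> G D c = G D' c" for c
    proof (cases "\<exists>r. get (fst c) AX = Pos r")
      case True
      then obtain r where "get (fst c) AX = Pos r" by blast
      then show ?thesis
        by (intro exI[of _ "{r}"]) (simp add: G_def twisted_slices_Pos mem_the_elem_image)
    next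
      case False
      then have "G D c = solved (cube edged) c" for D
        by (auto simp: G_def twisted_slices_def)
      then show ?thesis by simp
    qed
  qed
  moreover have "G (below W None) = twisted_slices (cube edged) S"
    by (simp add: G_def below_def FW image_image)
  ultimately have "terminal W \<sigma> (solved (cube edged)) (twisted_slices (cube edged) S)"
    unfolding terminal_def by (intro exI[of _ "\<lambda>p. G (below W p)"] conjI)
  moreover have "basic_seq W \<sigma>"
    using W by (simp add: basic_seq_def \<sigma>_def)
  ultimately show ?thesis
    unfolding accessible_def by (intro exI[of _ W] exI[of _ \<sigma>] conjI)
qed

lemma face_cells_in_cube:
  "((Pos r, PInf, Zero), AY) \<in> cube edged" "((Pos r, Zero, PInf), AZ) \<in> cube edged"
  unfolding cube_def edged_cube_def edgeless_cube_def
  by (auto simp: is_inf_def elim: get.elims)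

lemma twisted_slices_inj:
  assumes "twisted_slices (cube edged) S = twisted_slices (cube edged) S'"
  shows "S = S'"
proof -
  have "r \<in> S \<longleftrightarrow> r \<in> S'" for r
  proof -
    define c :: "'a cell" where "c = ((Pos r, Zero, PInf), AZ)"
    have "twisted_slices (cube edged) T c = (if r \<in> T then Blue else White)" for T
      by (auto simp: twisted_slices_def solved_def c_def unrot_x_def face_cells_in_cube)
    from this[of S] this[of S'] show ?thesis using assms by (simp split: if_splits)
  qed
  then show ?thesis by blast
qed

theorem mainTheorem20:
  fixes edged :: bool
  assumes "infinite (UNIV :: 'a set)"
  shows "\<exists>code :: 'a rel \<Rightarrow> 'a config.
           (\<forall>r. well_order_on UNIV r \<longrightarrow>
                  accessible (solved (cube edged)) (code r))
         \<and> (\<forall>r s. well_order_on UNIV r \<and> well_order_on UNIV s \<and> code r = code s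
                  \<longrightarrow> (r, s) \<in> BNF_Wellorder_Constructions.ordIso)"
proof -
  obtain h :: "'a \<times> 'a \<Rightarrow> 'a" where "bij_betw h (UNIV \<times> UNIV) UNIV"
    using card_of_ordIso[THEN iffD2, OF card_of_Times_same_infinite[OF assms]] by blast
  then have "inj h" by (simp add: bij_betw_def)
  have "(r, s) \<in> ordIso"
    if "well_order_on UNIV r"
      "twisted_slices (cube edged) (h ` r) = twisted_slices (cube edged) (h ` s)" for r s
  proof -
    have "r = s" using that(2) twisted_slices_inj \<open>inj h\<close> by (metis inj_image_eq_iff)
    then show ?thesis using that(1) ordIso_reflexive well_order_on_Field by metis
  qed
  then show ?thesis
    using accessible_twisted_slices
    by (intro exI[of _ "\<lambda>r. twisted_slices (cube edged) (h ` r)"]) blast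
qed

end
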